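(* Let $N=(V,E,\{\tau_{ij}\},\{u_{ij}\})$ be a temporal network with static (constant in time, not necessarily equal) integer edge lengths $\tau_{ij}$, $T$ a time horizon, and $\phi$ a cut function of a minimum $(s,0)$-$(d,T)$ cut of $\textsc{TEN}(N,T)$. Let $X_\phi=\{i:\phi(i)\in\{0,T+1\}\}$ and let $C\subseteq V\setminus X_\phi$ be such that for every $i\in C$, $\phi(i)$ does not belong to the union of $\mathcal T\cup\{\theta+\tau_{ij}:\theta\in\mathcal T,\ ij\in E\}$, $\{\phi(j)-\tau_{ij},\phi(j):ij\in E,\ j\notin C\}$ and $\{\phi(j)+\tau_{ji},\phi(j):ji\in E,\ j\notin C\}$. Then $\mathrm{cost}(\phi_C^+)=\mathrm{cost}(\phi_C^-)=\mathrm{cost}(\phi)$.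
   Context: $\textsc{TEN}(N,T)$ is the steady-state network on $V\times[0,T]$ with an edge $(i,t)\to(j,t+\tau_{ij})$ of capacity $u_{ij}(t)$ whenever $ij\in E$ and $u_{ij}(t)\ne0$, and an infinite-capacity edge $(i,t)\to(i,t+1)$ for $t\in[0,T-1]$; source $(s,0)$, sink $(d,T)$. A cut function is $\phi:V\to[0,T+1]$ with $\phi(s)=0,\phi(d)=T+1$, representing the cut with source side $\{(i,t):t\ge\phi(i)\}$; $\mathrm{cost}$ is total capacity of edges from source side to sink side. $\mathcal T=\{t:\exists ij\in E,\ u_{ij}(t)\ne u_{ij}(t-1)\}\cup\{0,T,T+1\}$. $\phi_C^\pm(i)=\phi(i)\pm1$ for $i\in C$ and $\phi_C^\pm(i)=\phi(i)$ otherwise. *)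

theory Defs
  imports Complex_Main
begin

text \<open>
  Temporal network N = (V, E, tau, u): finite vertex set V, edge set E of ordered
  pairs, static integer transit times tau i j, capacities u i j t at integer times t.
  Time is discrete; the horizon [0,T] is the integer interval {0..T}.
  The time-expanded network TEN(N,T) has node set V x {0..T}, a transit arc
  (i,t) -> (j,t + tau i j) of capacity u i j t whenever (i,j) in E, u i j t ~= 0 and
  both endpoints lie in V x {0..T}, and infinite-capacity holdover arcs
  (i,t) -> (i,t+1) for t in {0..T-1}.
\<close>

text \<open>Cut function: phi : V -> {0..T+1} with phi s = 0 and phi d = T+1.
  It represents the cut whose source side is {(i,t). t >= phi i}.\<close>
definition is_cut_fun :: "'v set \<Rightarrow> int \<Rightarrow> 'v \<Rightarrow> 'v \<Rightarrow> ('v \<Rightarrow> int) \<Rightarrow> bool" where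
  "is_cut_fun V T s d phi \<longleftrightarrow>
     (\<forall>i\<in>V. 0 \<le> phi i \<and> phi i \<le> T + 1) \<and> phi s = 0 \<and> phi d = T + 1"

definition src_side :: "('v \<Rightarrow> int) \<Rightarrow> 'v \<Rightarrow> int \<Rightarrow> bool" where
  "src_side phi i t \<longleftrightarrow> phi i \<le> t"

text \<open>Times t at which the transit arc (i,t) -> (j, t + tau i j) of TEN(N,T) exists
  and goes from the source side to the sink side of the cut phi.
  (Holdover arcs (i,t) -> (i,t+1) never go from the source side to the sink side,
  since the source side is upward closed in time, so they contribute nothing.)\<close>
definition crossing_times ::
  "('v \<Rightarrow> 'v \<Rightarrow> int) \<Rightarrow> ('v \<Rightarrow> 'v \<Rightarrow> int \<Rightarrow> real) \<Rightarrow> int \<Rightarrow> ('v \<Rightarrow> int) \<Rightarrow> 'v \<Rightarrow> 'v \<Rightarrow> int set" where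
  "crossing_times tau u T phi i j =
     {t. 0 \<le> t \<and> t \<le> T \<and> 0 \<le> t + tau i j \<and> t + tau i j \<le> T \<and> u i j t \<noteq> 0
         \<and> src_side phi i t \<and> \<not> src_side phi j (t + tau i j)}"

definition ten_cost ::
  "('v \<times> 'v) set \<Rightarrow> ('v \<Rightarrow> 'v \<Rightarrow> int) \<Rightarrow> ('v \<Rightarrow> 'v \<Rightarrow> int \<Rightarrow> real) \<Rightarrow> int \<Rightarrow> ('v \<Rightarrow> int) \<Rightarrow> real" where
  "ten_cost E tau u T phi =
     (\<Sum>(i,j)\<in>E. \<Sum>t\<in>crossing_times tau u T phi i j. u i j t)"

text \<open>phi is the cut function of a minimum (s,0)-(d,T) cut.  (Every finite-capacity
  cut of TEN(N,T) is upward closed in time at each vertex, hence is given by a cut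
  function, so minimising over cut functions is minimising over all cuts.)\<close>
definition is_min_cut_fun ::
  "'v set \<Rightarrow> ('v \<times> 'v) set \<Rightarrow> ('v \<Rightarrow> 'v \<Rightarrow> int) \<Rightarrow> ('v \<Rightarrow> 'v \<Rightarrow> int \<Rightarrow> real) \<Rightarrow> int
     \<Rightarrow> 'v \<Rightarrow> 'v \<Rightarrow> ('v \<Rightarrow> int) \<Rightarrow> bool" where
  "is_min_cut_fun V E tau u T s d phi \<longleftrightarrow>
     is_cut_fun V T s d phi \<and>
     (\<forall>psi. is_cut_fun V T s d psi \<longrightarrow> ten_cost E tau u T phi \<le> ten_cost E tau u T psi)"

text \<open>The breakpoint set \<T>: times t in {1..T} where some capacity changes
  (u is only defined on [0,T]), together with 0, T, T+1.\<close>
definition breakpoints ::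
  "('v \<times> 'v) set \<Rightarrow> ('v \<Rightarrow> 'v \<Rightarrow> int \<Rightarrow> real) \<Rightarrow> int \<Rightarrow> int set" where
  "breakpoints E u T =
     {t. 1 \<le> t \<and> t \<le> T \<and> (\<exists>(i,j)\<in>E. u i j t \<noteq> u i j (t - 1))} \<union> {0, T, T + 1}"

definition shift_up :: "'v set \<Rightarrow> ('v \<Rightarrow> int) \<Rightarrow> 'v \<Rightarrow> int" where
  "shift_up C phi = (\<lambda>i. if i \<in> C then phi i + 1 else phi i)"

definition shift_down :: "'v set \<Rightarrow> ('v \<Rightarrow> int) \<Rightarrow> 'v \<Rightarrow> int" where
  "shift_down C phi = (\<lambda>i. if i \<in> C then phi i - 1 else phi i)"

end

theory Submission
  imports Defs
begin

text \<open>
  For a cut function with values in [0, T+1], the edge ij crosses the cut exactly at the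
  times of the window [phi i, phi j - tau ij), so the cost is a sum over the edges of the
  capacity summed over these windows.  Shifting phi by one on C moves the left end of the
  window of ij when i is in C and the right end when j is in C.  The hypotheses on C
  guarantee that the capacity does not change at the moving ends and that no edge between
  C and its complement has a window with coinciding ends, so every window sum is affine
  along the shift.  Hence cost(phi+) + cost(phi-) = 2 cost(phi), and minimality of phi
  forces both equalities.
\<close>

lemma sum_atLeastLessThan_int_extend_right:
  fixes f :: "int \<Rightarrow> 'a::comm_monoid_add"
  assumes "a \<le> b"
  shows "sum f {a..<b + 1} = sum f {a..<b} + f b"
proof -
  have "{a..<b + 1} = insert b {a..<b}" using assms by auto
  then show ?thesis by (simp add: add.commute)
qed

lemma sum_atLeastLessThan_int_extend_left:
  fixes f :: "int \<Rightarrow> 'a::comm_monoid_add"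
  assumes "a \<le> b"
  shows "sum f {a - 1..<b} = f (a - 1) + sum f {a..<b}"
proof -
  have "{a - 1..<b} = insert (a - 1) {a..<b}" using assms by auto
  then show ?thesis by simp
qed

lemma sum_atLeastLessThan_int_shift_midpoint:
  fixes f :: "int \<Rightarrow> 'a::ring_1" and a b ea eb :: int
  assumes "ea \<in> {0, 1}" "eb \<in> {0, 1}"
    and "ea \<noteq> eb \<Longrightarrow> a \<noteq> b"
    and "a < b \<Longrightarrow> ea = 1 \<Longrightarrow> f a = f (a - 1)"
    and "a < b \<Longrightarrow> eb = 1 \<Longrightarrow> f b = f (b - 1)"
  shows "sum f {a + ea..<b + eb} + sum f {a - ea..<b - eb} = 2 * sum f {a..<b}"
proof (cases "a < b")
  case True
  have left_up: "sum f {a..<b} = f a + sum f {a + 1..<b}"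
    using sum_atLeastLessThan_int_extend_left[of "a + 1" b f] True by simp
  have left_down: "sum f {a - 1..<b} = f (a - 1) + sum f {a..<b}"
    using sum_atLeastLessThan_int_extend_left[of a b f] True by simp
  have right_up: "sum f {a..<b + 1} = sum f {a..<b} + f b"
    using sum_atLeastLessThan_int_extend_right[of a b f] True by simp
  have right_down: "sum f {a..<b} = sum f {a..<b - 1} + f (b - 1)"
    using sum_atLeastLessThan_int_extend_right[of a "b - 1" f] True by simp
  have right_up': "sum f {a + 1..<b + 1} = sum f {a + 1..<b} + f b"
    using sum_atLeastLessThan_int_extend_right[of "a + 1" b f] True by simp
  have left_down': "sum f {a - 1..<b - 1} = f (a - 1) + sum f {a..<b - 1}"
    using sum_atLeastLessThan_int_extend_left[of a "b - 1" f] True by simp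
  from assms(1,2) consider "ea = 0" "eb = 0" | "ea = 1" "eb = 0" | "ea = 0" "eb = 1"
    | "ea = 1" "eb = 1"
    by auto
  then show ?thesis
  proof cases
    case 1
    then show ?thesis by (simp add: mult_2)
  next
    case 2
    then show ?thesis using assms(4) True left_up left_down by (simp add: algebra_simps mult_2)
  next
    case 3
    then show ?thesis using assms(5) True right_up right_down by (simp add: algebra_simps mult_2)
  next
    case 4
    then show ?thesis
      using assms(4,5) True left_up right_down right_up' left_down'
      by (simp add: algebra_simps mult_2)
  qed
next
  case False
  then have "sum f {a + ea..<b + eb} = 0" "sum f {a - ea..<b - eb} = 0" "sum f {a..<b} = 0"
    using assms(1-3) by auto
  then show ?thesis by simp
qed

text \<open>The horizon constraints in crossing_times are implied by the window, because
  psi j \<le> T + 1 and tau i j \<ge> 0; times of zero capacity contribute nothing.\<close>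

lemma sum_crossing_times_eq_window:
  assumes "0 \<le> psi i" "psi j \<le> T + 1" "0 \<le> tau i j"
  shows "(\<Sum>t\<in>crossing_times tau u T psi i j. u i j t)
    = (\<Sum>t\<in>{psi i..<psi j - tau i j}. u i j t)"
  by (rule sum.mono_neutral_left)
    (use assms in \<open>auto simp: crossing_times_def src_side_def\<close>)

lemma ten_cost_eq_window_sums:
  assumes "E \<subseteq> V \<times> V" "\<forall>(i,j)\<in>E. 0 \<le> tau i j" "\<forall>i\<in>V. 0 \<le> psi i \<and> psi i \<le> T + 1"
  shows "ten_cost E tau u T psi = (\<Sum>(i,j)\<in>E. \<Sum>t\<in>{psi i..<psi j - tau i j}. u i j t)"
  unfolding ten_cost_def
  by (rule sum.cong) (use assms in \<open>auto intro!: sum_crossing_times_eq_window\<close>)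

lemma capacity_eq_prev_if_not_breakpoint:
  assumes "(i,j) \<in> E" "1 \<le> t" "t \<le> T" "t \<notin> breakpoints E u T"
  shows "u i j t = u i j (t - 1)"
  using assms unfolding breakpoints_def by blast

lemma shift_up_eq: "shift_up C phi i = phi i + of_bool (i \<in> C)"
  by (simp add: shift_up_def)

lemma shift_down_eq: "shift_down C phi i = phi i - of_bool (i \<in> C)"
  by (simp add: shift_down_def)

lemma is_cut_fun_shift_up:
  assumes "is_cut_fun V T s d phi" "\<forall>i\<in>C. 1 \<le> phi i \<and> phi i \<le> T"
  shows "is_cut_fun V T s d (shift_up C phi)"
  using assms by (force simp: is_cut_fun_def shift_up_def)

lemma is_cut_fun_shift_down:
  assumes "is_cut_fun V T s d phi" "\<forall>i\<in>C. 1 \<le> phi i \<and> phi i \<le> T"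
  shows "is_cut_fun V T s d (shift_down C phi)"
  using assms by (force simp: is_cut_fun_def shift_down_def)

lemma ten_cost_shift_up_add_shift_down:
  assumes E: "E \<subseteq> V \<times> V" and tau: "\<forall>(i,j)\<in>E. 0 \<le> tau i j"
    and range: "\<forall>i\<in>V. 0 \<le> phi i \<and> phi i \<le> T + 1"
    and C_range: "\<forall>i\<in>C. 1 \<le> phi i \<and> phi i \<le> T"
    and tail: "\<And>i j. (i,j) \<in> E \<Longrightarrow> i \<in> C \<Longrightarrow> phi i \<notin> breakpoints E u T"
    and head: "\<And>i j. (i,j) \<in> E \<Longrightarrow> j \<in> C \<Longrightarrow> phi j - tau i j \<notin> breakpoints E u T"
    and across: "\<And>i j. (i,j) \<in> E \<Longrightarrow> (i \<in> C) \<noteq> (j \<in> C) \<Longrightarrow> phi i \<noteq> phi j - tau i j"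
  shows "ten_cost E tau u T (shift_up C phi) + ten_cost E tau u T (shift_down C phi)
    = 2 * ten_cost E tau u T phi"
proof -
  let ?window = "\<lambda>psi i j. \<Sum>t\<in>{psi i..<psi j - tau i j}. u i j t"
  have edge: "?window (shift_up C phi) i j + ?window (shift_down C phi) i j = 2 * ?window phi i j"
    if ij: "(i,j) \<in> E" for i j
  proof -
    define ea eb :: int where "ea = of_bool (i \<in> C)" and "eb = of_bool (j \<in> C)"
    have "sum (u i j) {phi i + ea..<(phi j - tau i j) + eb}
        + sum (u i j) {phi i - ea..<(phi j - tau i j) - eb} = 2 * ?window phi i j"
    proof (rule sum_atLeastLessThan_int_shift_midpoint)
      show "ea \<noteq> eb \<Longrightarrow> phi i \<noteq> phi j - tau i j"
        using across[OF ij] by (cases "i \<in> C"; cases "j \<in> C") (auto simp: ea_def eb_def)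
      show "u i j (phi i) = u i j (phi i - 1)" if "ea = 1"
        using that C_range tail[OF ij]
        by (auto simp: ea_def intro: capacity_eq_prev_if_not_breakpoint[OF ij])
      show "u i j (phi j - tau i j) = u i j (phi j - tau i j - 1)"
        if "phi i < phi j - tau i j" "eb = 1"
      proof (rule capacity_eq_prev_if_not_breakpoint[OF ij])
        have "j \<in> C" using that(2) by (simp add: eb_def)
        then show "phi j - tau i j \<le> T" "phi j - tau i j \<notin> breakpoints E u T"
          using head[OF ij] C_range tau ij by force+
        show "1 \<le> phi j - tau i j" using that(1) range E ij by force
      qed
    qed (auto simp: ea_def eb_def)
    then show ?thesis
      by (simp add: shift_up_eq shift_down_eq ea_def eb_def algebra_simps)
  qed
  have up_range: "\<forall>i\<in>V. 0 \<le> shift_up C phi i \<and> shift_up C phi i \<le> T + 1"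
    and down_range: "\<forall>i\<in>V. 0 \<le> shift_down C phi i \<and> shift_down C phi i \<le> T + 1"
    using range C_range by (auto simp: shift_up_def shift_down_def)
  have "ten_cost E tau u T (shift_up C phi) + ten_cost E tau u T (shift_down C phi)
      = (\<Sum>(i,j)\<in>E. ?window (shift_up C phi) i j + ?window (shift_down C phi) i j)"
    by (simp add: ten_cost_eq_window_sums[OF E tau up_range]
        ten_cost_eq_window_sums[OF E tau down_range] sum.distrib case_prod_unfold)
  also have "\<dots> = (\<Sum>(i,j)\<in>E. 2 * ?window phi i j)"
    by (rule sum.cong) (auto simp: edge)
  also have "\<dots> = 2 * ten_cost E tau u T phi"
    by (simp add: ten_cost_eq_window_sums[OF E tau range] sum_distrib_left case_prod_unfold)
  finally show ?thesis .
qed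

theorem mainTheorem4:
  fixes V :: "'v set" and E :: "('v \<times> 'v) set"
    and tau :: "'v \<Rightarrow> 'v \<Rightarrow> int" and u :: "'v \<Rightarrow> 'v \<Rightarrow> int \<Rightarrow> real"
    and T :: int and s d :: 'v and phi :: "'v \<Rightarrow> int" and C :: "'v set"
  assumes "finite V" and "E \<subseteq> V \<times> V" and "s \<in> V" and "d \<in> V"
    and "\<forall>(i,j)\<in>E. 0 \<le> tau i j"
    and "\<forall>(i,j)\<in>E. \<forall>t\<in>{0..T}. 0 \<le> u i j t"
    and "0 \<le> T"
    and "is_min_cut_fun V E tau u T s d phi"
    and "C \<subseteq> V - {i. phi i \<in> {0, T + 1}}"
    and "\<forall>i\<in>C. phi i \<notin>
           (breakpoints E u T \<union> {th + tau k l | th k l. th \<in> breakpoints E u T \<and> (k,l) \<in> E})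
           \<union> {x. \<exists>j. (i,j) \<in> E \<and> j \<notin> C \<and> (x = phi j - tau i j \<or> x = phi j)}
           \<union> {x. \<exists>j. (j,i) \<in> E \<and> j \<notin> C \<and> (x = phi j + tau j i \<or> x = phi j)}"
  shows "ten_cost E tau u T (shift_up C phi) = ten_cost E tau u T phi
       \<and> ten_cost E tau u T (shift_down C phi) = ten_cost E tau u T phi"
proof -
  have cut: "is_cut_fun V T s d phi" and min: "\<And>psi. is_cut_fun V T s d psi
      \<Longrightarrow> ten_cost E tau u T phi \<le> ten_cost E tau u T psi"
    using assms(8) by (auto simp: is_min_cut_fun_def)
  have range: "\<forall>i\<in>V. 0 \<le> phi i \<and> phi i \<le> T + 1"
    using cut by (simp add: is_cut_fun_def)
  have C_range: "\<forall>i\<in>C. 1 \<le> phi i \<and> phi i \<le> T"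
    using assms(9) range by force
  have "ten_cost E tau u T (shift_up C phi) + ten_cost E tau u T (shift_down C phi)
      = 2 * ten_cost E tau u T phi"
  proof (rule ten_cost_shift_up_add_shift_down[OF assms(2,5) range C_range])
    show "phi i \<notin> breakpoints E u T" if "i \<in> C" for i
      using assms(10) that by blast
    show "phi j - tau i j \<notin> breakpoints E u T" if "(i,j) \<in> E" "j \<in> C" for i j
      using assms(10) that by force
    show "phi i \<noteq> phi j - tau i j" if "(i,j) \<in> E" "(i \<in> C) \<noteq> (j \<in> C)" for i j
      using assms(10) that by force
  qed
  moreover have "ten_cost E tau u T phi \<le> ten_cost E tau u T (shift_up C phi)"
    and "ten_cost E tau u T phi \<le> ten_cost E tau u T (shift_down C phi)"
    using min is_cut_fun_shift_up[OF cut C_range] is_cut_fun_shift_down[OF cut C_range] by auto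
  ultimately show ?thesis by linarith
qed

end
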